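(* Let $a(x)=\sum_i a_ix^i$ and $b(x)=\sum_ib_ix^i$ in $\mathbb{F}_2[x]/\langle x^n-1\rangle$ define a generalized bicycle code. Its Tanner graph has girth $4$ if and only if there exist indices $i,j,j'\in\{0,1,\dots,n-1\}$ with $j\ne j'$ such that at least one of the following holds (indices modulo $n$): (i) $i\neq 0$, $a_j=a_{j+i}=1$ and $a_{j'}=a_{j'+i}=1$; (ii) $i\neq 0$, $b_j=b_{j+i}=1$ and $b_{j'}=b_{j'+i}=1$; (iii) $a_j=b_{j+i}=1$ and $a_{j'}=b_{j'+i}=1$.
   Context: The Tanner graph of the GB code defined by $a,b$ is the bipartite graph with $n$ check nodes $x_0,\dots,x_{n-1}$ (rows of the X-check matrix $H_X=[G_{a(x)}\mid G_{b(x)}]$) and $2n$ qubit nodes $q_0,\dots,q_{n-1},q'_0,\dots,q'_{n-1}$, where $x_t$ is adjacent to $q_c$ iff $a_{t-c}=1$ and to $q'_c$ iff $b_{t-c}=1$ (indices mod $n$; $G_{a(x)}$ is the circulant matrix with $(t,c)$ entry $a_{t-c}$). The girth is the length of a shortest cycle. *)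

theory Defs
  imports Main "HOL-Library.Extended_Nat"
begin

text \<open>Coefficients of a(x), b(x) in F_2[x]/(x^n-1) are given as functions
  nat => bool (True meaning coefficient 1); only indices < n matter.\<close>

datatype tnode = Chk nat | Qb nat | Qp nat

text \<open>Tanner graph adjacency: x_t ~ q_c iff a_{t-c}=1, x_t ~ q'_c iff b_{t-c}=1 (mod n).\<close>
fun tanner_adj :: "nat \<Rightarrow> (nat \<Rightarrow> bool) \<Rightarrow> (nat \<Rightarrow> bool) \<Rightarrow> tnode \<Rightarrow> tnode \<Rightarrow> bool" where
  "tanner_adj n a b (Chk t) (Qb c) = (t < n \<and> c < n \<and> a ((t + n - c) mod n))"
| "tanner_adj n a b (Qb c) (Chk t) = (t < n \<and> c < n \<and> a ((t + n - c) mod n))"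
| "tanner_adj n a b (Chk t) (Qp c) = (t < n \<and> c < n \<and> b ((t + n - c) mod n))"
| "tanner_adj n a b (Qp c) (Chk t) = (t < n \<and> c < n \<and> b ((t + n - c) mod n))"
| "tanner_adj n a b _ _ = False"

definition is_cycle :: "('v \<Rightarrow> 'v \<Rightarrow> bool) \<Rightarrow> 'v list \<Rightarrow> bool" where
  "is_cycle E vs \<longleftrightarrow> length vs \<ge> 3 \<and> distinct vs \<and>
     (\<forall>i < length vs. E (vs ! i) (vs ! ((i + 1) mod length vs)))"

definition girth :: "('v \<Rightarrow> 'v \<Rightarrow> bool) \<Rightarrow> enat" where
  "girth E = (if \<exists>vs. is_cycle E vs
              then enat (LEAST k. \<exists>vs. is_cycle E vs \<and> length vs = k)
              else \<infinity>)"

end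

theory Submission
  imports Defs
begin

text \<open>Every edge of the Tanner graph joins a check to a qubit, so there are no triangles
  and girth 4 means a 4-cycle x_t1 - u - x_t2 - v. Adjacency only depends on differences
  t - c mod n, so for qubits u = q_c1 and v = q_c2 (or v = q'_c2) the cycle says exactly that
  the shift by i = c1 - c2 maps the two distinct points j = t1 - c1, j' = t2 - c1 of the
  support of a into the support of a (or b); and i \<noteq> 0 exactly when u \<noteq> v are qubits of
  the same kind. Conversely, such i, j, j' give the cycle through the checks x_j, x_j' and
  the qubits with indices 0 and -i.\<close>

lemma is_cycle_3_iff:
  "is_cycle E [x, y, z] \<longleftrightarrow> distinct [x, y, z] \<and> E x y \<and> E y z \<and> E z x"
  by (auto simp: is_cycle_def All_less_Suc)

lemma is_cycle_4_iff:
  "is_cycle E [w, x, y, z] \<longleftrightarrow> distinct [w, x, y, z] \<and> E w x \<and> E x y \<and> E y z \<and> E z w"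
  by (auto simp: is_cycle_def All_less_Suc)

lemma girth_eq_enat_iff:
  "girth E = enat k \<longleftrightarrow>
     (\<exists>vs. is_cycle E vs \<and> length vs = k) \<and> (\<forall>vs. is_cycle E vs \<longrightarrow> k \<le> length vs)"
  (is "_ \<longleftrightarrow> ?P k \<and> ?min k")
proof
  assume "girth E = enat k"
  then have "\<exists>vs. is_cycle E vs" and "k = (LEAST k. ?P k)"
    by (auto simp: girth_def split: if_splits)
  then show "?P k \<and> ?min k"
    using LeastI_ex[of ?P] Least_le[of ?P] by blast
next
  assume "?P k \<and> ?min k"
  then have "(LEAST k. ?P k) = k"
    by (intro Least_equality) auto
  then show "girth E = enat k"
    using \<open>?P k \<and> ?min k\<close> by (auto simp: girth_def)
qed

lemma girth_eq_4_iff: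
  assumes "\<And>vs. is_cycle E vs \<Longrightarrow> length vs \<noteq> 3"
  shows "girth E = 4 \<longleftrightarrow> (\<exists>vs. is_cycle E vs \<and> length vs = 4)"
proof -
  have "length vs \<ge> 4" if "is_cycle E vs" for vs
    using assms[OF that] that by (fastforce simp: is_cycle_def)
  then show ?thesis
    by (auto simp: numeral_eq_enat girth_eq_enat_iff)
qed

definition residue :: "nat \<Rightarrow> int \<Rightarrow> nat" where
  "residue n u = nat (u mod int n)"

lemma residue_lt: "n > 0 \<Longrightarrow> residue n u < n"
  by (simp add: residue_def nat_less_iff)

lemma residue_of_nat: "j < n \<Longrightarrow> residue n (int j) = j"
  by (simp add: residue_def)

lemma residue_diff: "x < n \<Longrightarrow> y < n \<Longrightarrow> (x + n - y) mod n = residue n (int x - int y)"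
proof -
  assume "x < n" "y < n"
  then have "int (x + n - y) = (int x - int y) + int n" by simp
  then have "int ((x + n - y) mod n) = (int x - int y) mod int n"
    by (simp add: of_nat_mod)
  then show ?thesis by (simp add: residue_def)
qed

lemma residue_add: "(j + i) mod n = residue n (int j + int i)"
  by (simp add: residue_def flip: of_nat_add of_nat_mod)

lemma residue_add_residue: "n > 0 \<Longrightarrow> (residue n u + residue n v) mod n = residue n (u + v)"
  by (simp add: residue_add residue_def mod_add_eq)

lemma residue_diff_residue: "n > 0 \<Longrightarrow> residue n (u - int (residue n v)) = residue n (u - v)"
  by (simp add: residue_def mod_diff_right_eq)

lemma residue_diff_eq_0_iff:
  "x < n \<Longrightarrow> y < n \<Longrightarrow> residue n (int x - int y) = 0 \<longleftrightarrow> x = y"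
proof -
  assume "x < n" "y < n"
  then have "residue n (int x - int y) = 0 \<longleftrightarrow> int x mod int n = int y mod int n"
    unfolding mod_eq_dvd_iff dvd_eq_mod_eq_0 by (simp add: residue_def nat_eq_iff)
  with \<open>x < n\<close> \<open>y < n\<close> show ?thesis by simp
qed

lemma mod_diff_add_cancel:
  fixes x y n :: nat
  assumes "x < n" "y < n"
  shows "((x + n - y) mod n + y) mod n = x"
proof -
  have "((x + n - y) mod n + y) mod n = (x + n - y + y) mod n"
    by (rule mod_add_left_eq)
  also have "\<dots> = x"
    using assms by simp
  finally show ?thesis .
qed

lemma mod_diff_right_inj:
  fixes x x' y n :: nat
  shows "x < n \<Longrightarrow> x' < n \<Longrightarrow> y < n \<Longrightarrow> (x + n - y) mod n = (x' + n - y) mod n \<longleftrightarrow> x = x'"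
  by (metis mod_diff_add_cancel)

definition shared_shift :: "nat \<Rightarrow> (nat \<Rightarrow> bool) \<Rightarrow> (nat \<Rightarrow> bool) \<Rightarrow> nat \<Rightarrow> bool" where
  "shared_shift n f g i \<longleftrightarrow> (\<exists>j j'. j < n \<and> j' < n \<and> j \<noteq> j' \<and>
     f j \<and> g ((j + i) mod n) \<and> f j' \<and> g ((j' + i) mod n))"

lemma shared_shift_of_square:
  assumes "n > 0" "t1 < n" "t2 < n" "c1 < n" "c2 < n" "t1 \<noteq> t2"
    and "f ((t1 + n - c1) mod n)" "f ((t2 + n - c1) mod n)"
    and "g ((t1 + n - c2) mod n)" "g ((t2 + n - c2) mod n)"
  shows "shared_shift n f g (residue n (int c1 - int c2))"
  unfolding shared_shift_def
proof (intro exI conjI)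
  let ?i = "residue n (int c1 - int c2)"
  have "((t + n - c1) mod n + ?i) mod n = (t + n - c2) mod n" if "t < n" for t
    using assms that by (simp add: residue_diff residue_add_residue)
  then show "g (((t1 + n - c1) mod n + ?i) mod n)" "g (((t2 + n - c1) mod n + ?i) mod n)"
    using assms by simp_all
  show "(t1 + n - c1) mod n \<noteq> (t2 + n - c1) mod n"
    using assms by (simp add: mod_diff_right_inj)
qed (use assms in simp_all)

lemma square_of_shared_shift:
  assumes "n > 0" "i < n" "shared_shift n f g i"
  obtains t1 t2 c1 c2 where "t1 < n" "t2 < n" "c1 < n" "c2 < n" "t1 \<noteq> t2"
    and "residue n (int c1 - int c2) = i"
    and "f ((t1 + n - c1) mod n)" "f ((t2 + n - c1) mod n)"
    and "g ((t1 + n - c2) mod n)" "g ((t2 + n - c2) mod n)"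
proof -
  obtain j j' where j: "j < n" "j' < n" "j \<noteq> j'"
    and fg: "f j" "g ((j + i) mod n)" "f j'" "g ((j' + i) mod n)"
    using assms(3) by (auto simp: shared_shift_def)
  let ?c = "residue n (- int i)"
  have c: "?c < n" using assms by (simp add: residue_lt)
  have "(t + n - ?c) mod n = (t + i) mod n" if "t < n" for t
    using assms that c by (simp add: residue_diff residue_diff_residue residue_add)
  moreover have "residue n (0 - int ?c) = i"
    using assms by (simp only: residue_diff_residue) (simp add: residue_of_nat)
  ultimately show ?thesis
    using that[of j j' 0 ?c] assms j fg c by simp
qed

lemma tanner_adj_check_iff:
  "tanner_adj n a b u v \<Longrightarrow> (\<exists>t. u = Chk t) \<longleftrightarrow> (\<nexists>t. v = Chk t)"
  by (cases u; cases v) auto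

lemma tanner_triangle_free: "is_cycle (tanner_adj n a b) vs \<Longrightarrow> length vs \<noteq> 3"
proof
  assume "is_cycle (tanner_adj n a b) vs" "length vs = 3"
  then obtain x y z where "is_cycle (tanner_adj n a b) [x, y, z]"
    by (auto simp: length_Suc_conv numeral_eq_Suc)
  then show False
    by (cases x; cases y; cases z) (simp_all add: is_cycle_3_iff)
qed

definition checks_share_two_qubits :: "nat \<Rightarrow> (nat \<Rightarrow> bool) \<Rightarrow> (nat \<Rightarrow> bool) \<Rightarrow> bool" where
  "checks_share_two_qubits n a b \<longleftrightarrow> (\<exists>t1 t2 u v. t1 \<noteq> t2 \<and> u \<noteq> v \<and>
      tanner_adj n a b (Chk t1) u \<and> tanner_adj n a b u (Chk t2) \<and>
      tanner_adj n a b (Chk t2) v \<and> tanner_adj n a b v (Chk t1))"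

lemma tanner_four_cycle_iff:
  "(\<exists>vs. is_cycle (tanner_adj n a b) vs \<and> length vs = 4) \<longleftrightarrow> checks_share_two_qubits n a b"
  (is "?cycle \<longleftrightarrow> ?checks")
proof
  assume ?cycle
  then obtain w x y z where wxyz: "is_cycle (tanner_adj n a b) [w, x, y, z]"
    by (auto simp: length_Suc_conv numeral_eq_Suc)
  have rotated: "is_cycle (tanner_adj n a b) [x, y, z, w]"
    using wxyz by (auto simp: is_cycle_4_iff)
  have from_check: ?checks if cycle: "is_cycle (tanner_adj n a b) [w, x, y, z]" and "w = Chk t1"
    for w x y z t1
  proof -
    obtain t2 where "y = Chk t2"
      using cycle \<open>w = Chk t1\<close> tanner_adj_check_iff[of n a b w x] tanner_adj_check_iff[of n a b x y]
      by (auto simp: is_cycle_4_iff)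
    with that show ?checks
      by (auto simp: is_cycle_4_iff checks_share_two_qubits_def)
  qed
  have "tanner_adj n a b w x"
    using wxyz by (simp add: is_cycle_4_iff)
  then consider t where "w = Chk t" | t where "x = Chk t"
    using tanner_adj_check_iff by blast
  then show ?checks
    by cases (use from_check[OF wxyz] from_check[OF rotated] in blast)+
next
  assume ?checks
  then obtain t1 t2 u v where "t1 \<noteq> t2" "u \<noteq> v"
    and "tanner_adj n a b (Chk t1) u" "tanner_adj n a b u (Chk t2)"
    and "tanner_adj n a b (Chk t2) v" "tanner_adj n a b v (Chk t1)"
    by (auto simp: checks_share_two_qubits_def)
  then have "is_cycle (tanner_adj n a b) [Chk t1, u, Chk t2, v]"
    by (auto simp: is_cycle_4_iff)
  then show ?cycle
    by fastforce
qed

lemma shared_shift_of_checks_share_two_qubits: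
  assumes "n > 0" "checks_share_two_qubits n a b"
  shows "\<exists>i<n. (i \<noteq> 0 \<and> shared_shift n a a i) \<or> (i \<noteq> 0 \<and> shared_shift n b b i) \<or>
    shared_shift n a b i"
proof -
  obtain t1 t2 u v where t: "t1 \<noteq> t2" and "u \<noteq> v"
    and adj: "tanner_adj n a b (Chk t1) u" "tanner_adj n a b u (Chk t2)"
      "tanner_adj n a b (Chk t2) v" "tanner_adj n a b v (Chk t1)"
    using assms(2) by (auto simp: checks_share_two_qubits_def)
  have shift_lt: "residue n (int c1 - int c2) < n" for c1 c2
    using assms(1) by (rule residue_lt)
  have shift_nonzero: "residue n (int c1 - int c2) \<noteq> 0" if "c1 < n" "c2 < n" "c1 \<noteq> c2" for c1 c2
    using that by (simp add: residue_diff_eq_0_iff)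
  show ?thesis
  proof (cases u; cases v)
    fix c1 c2 assume uv: "u = Qb c1" "v = Qb c2"
    with adj have "shared_shift n a a (residue n (int c1 - int c2))"
      by (intro shared_shift_of_square[OF assms(1) _ _ _ _ t]) auto
    with uv \<open>u \<noteq> v\<close> adj show ?thesis
      using shift_lt[of c1 c2] shift_nonzero[of c1 c2] by auto
  next
    fix c1 c2 assume uv: "u = Qp c1" "v = Qp c2"
    with adj have "shared_shift n b b (residue n (int c1 - int c2))"
      by (intro shared_shift_of_square[OF assms(1) _ _ _ _ t]) auto
    with uv \<open>u \<noteq> v\<close> adj show ?thesis
      using shift_lt[of c1 c2] shift_nonzero[of c1 c2] by auto
  next
    fix c1 c2 assume "u = Qb c1" "v = Qp c2"
    with adj have "shared_shift n a b (residue n (int c1 - int c2))"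
      by (intro shared_shift_of_square[OF assms(1) _ _ _ _ t]) auto
    then show ?thesis
      using shift_lt[of c1 c2] by blast
  next
    fix c1 c2 assume "u = Qp c2" "v = Qb c1"
    with adj have "shared_shift n a b (residue n (int c1 - int c2))"
      by (intro shared_shift_of_square[OF assms(1) _ _ _ _ t]) auto
    then show ?thesis
      using shift_lt[of c1 c2] by blast
  qed (use adj in auto)
qed

lemma checks_share_two_qubits_of_shared_shift:
  assumes "n > 0" "i < n"
    and "(i \<noteq> 0 \<and> shared_shift n a a i) \<or> (i \<noteq> 0 \<and> shared_shift n b b i) \<or>
      shared_shift n a b i"
  shows "checks_share_two_qubits n a b"
  using assms(3)
proof (elim disjE conjE)
  assume "i \<noteq> 0" "shared_shift n a a i"
  obtain t1 t2 c1 c2 where "t1 < n" "t2 < n" "c1 < n" "c2 < n" "t1 \<noteq> t2"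
    and shift: "residue n (int c1 - int c2) = i"
    and "a ((t1 + n - c1) mod n)" "a ((t2 + n - c1) mod n)"
    and "a ((t1 + n - c2) mod n)" "a ((t2 + n - c2) mod n)"
    by (rule square_of_shared_shift[OF assms(1,2) \<open>shared_shift n a a i\<close>])
  moreover have "c1 \<noteq> c2"
    using residue_diff_eq_0_iff[OF \<open>c1 < n\<close> \<open>c2 < n\<close>] shift \<open>i \<noteq> 0\<close> by simp
  ultimately show ?thesis
    unfolding checks_share_two_qubits_def
    by (intro exI[of _ t1] exI[of _ t2] exI[of _ "Qb c1"] exI[of _ "Qb c2"]) auto
next
  assume "i \<noteq> 0" "shared_shift n b b i"
  obtain t1 t2 c1 c2 where "t1 < n" "t2 < n" "c1 < n" "c2 < n" "t1 \<noteq> t2"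
    and shift: "residue n (int c1 - int c2) = i"
    and "b ((t1 + n - c1) mod n)" "b ((t2 + n - c1) mod n)"
    and "b ((t1 + n - c2) mod n)" "b ((t2 + n - c2) mod n)"
    by (rule square_of_shared_shift[OF assms(1,2) \<open>shared_shift n b b i\<close>])
  moreover have "c1 \<noteq> c2"
    using residue_diff_eq_0_iff[OF \<open>c1 < n\<close> \<open>c2 < n\<close>] shift \<open>i \<noteq> 0\<close> by simp
  ultimately show ?thesis
    unfolding checks_share_two_qubits_def
    by (intro exI[of _ t1] exI[of _ t2] exI[of _ "Qp c1"] exI[of _ "Qp c2"]) auto
next
  assume "shared_shift n a b i"
  obtain t1 t2 c1 c2 where "t1 < n" "t2 < n" "c1 < n" "c2 < n" "t1 \<noteq> t2"
    and "a ((t1 + n - c1) mod n)" "a ((t2 + n - c1) mod n)"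
    and "b ((t1 + n - c2) mod n)" "b ((t2 + n - c2) mod n)"
    by (rule square_of_shared_shift[OF assms(1,2) \<open>shared_shift n a b i\<close>])
  then show ?thesis
    unfolding checks_share_two_qubits_def
    by (intro exI[of _ t1] exI[of _ t2] exI[of _ "Qb c1"] exI[of _ "Qp c2"]) auto
qed

theorem theorem10:
  fixes n :: nat and a b :: "nat \<Rightarrow> bool"
  assumes "n > 0"
  shows "girth (tanner_adj n a b) = 4 \<longleftrightarrow>
    (\<exists>i j j'. i < n \<and> j < n \<and> j' < n \<and> j \<noteq> j' \<and>
      ((i \<noteq> 0 \<and> a j \<and> a ((j + i) mod n) \<and> a j' \<and> a ((j' + i) mod n)) \<or>
       (i \<noteq> 0 \<and> b j \<and> b ((j + i) mod n) \<and> b j' \<and> b ((j' + i) mod n)) \<or>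
       (a j \<and> b ((j + i) mod n) \<and> a j' \<and> b ((j' + i) mod n))))"
proof -
  have "girth (tanner_adj n a b) = 4 \<longleftrightarrow>
      (\<exists>vs. is_cycle (tanner_adj n a b) vs \<and> length vs = 4)"
    using girth_eq_4_iff tanner_triangle_free by blast
  also have "\<dots> \<longleftrightarrow> checks_share_two_qubits n a b"
    by (rule tanner_four_cycle_iff)
  also have "\<dots> \<longleftrightarrow> (\<exists>i<n. (i \<noteq> 0 \<and> shared_shift n a a i) \<or>
      (i \<noteq> 0 \<and> shared_shift n b b i) \<or> shared_shift n a b i)"
    using shared_shift_of_checks_share_two_qubits checks_share_two_qubits_of_shared_shift assms
    by blast
  finally show ?thesis
    unfolding shared_shift_def by blast
qed

end
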